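(* Let $0<k<n$, and let $A\in\mathbb{Z}^{k\times n}$ and $B\in\mathbb{Z}^{(n-k)\times n}$ be integer matrices of full row rank such that $A B^T=0$. Then \[ \operatorname{ndet}(L_R(A))=\operatorname{ndet}(L_R(B)), \] that is, \[ \frac{\sqrt{\det(AA^T)}}{\det(L_C(A))}=\frac{\sqrt{\det(BB^T)}}{\det(L_C(B))}. \]
   Context: For an integer matrix $M\in\mathbb{Z}^{m\times n}$, $L_R(M)\subseteq\mathbb{Z}^n$ denotes the lattice generated by the rows of $M$ and $L_C(M)\subseteq\mathbb{Z}^m$ the lattice generated by the columns of $M$. For a lattice $L$ with basis matrix $V$ (a matrix whose rows form a $\mathbb{Z}$-basis of $L$), $\det(L)=\sqrt{\det(VV^T)}$, independent of the choice of basis. For a lattice $\Lambda$ with basis matrix $M$ of full row rank, the normalized determinant is $\operatorname{ndet}(\Lambda)=\det(L_R(M))/\det(L_C(M))$. *)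

theory Defs
  imports "Jordan_Normal_Form.Determinant" "HOL.Real"
begin

definition L_R :: "int mat \<Rightarrow> int vec set" where
  "L_R M = {transpose_mat M *\<^sub>v c | c. c \<in> carrier_vec (dim_row M)}"

definition L_C :: "int mat \<Rightarrow> int vec set" where
  "L_C M = {M *\<^sub>v c | c. c \<in> carrier_vec (dim_col M)}"

definition full_row_rank :: "int mat \<Rightarrow> bool" where
  "full_row_rank M \<longleftrightarrow>
     (\<forall>c \<in> carrier_vec (dim_row M).
        transpose_mat (map_mat (of_int :: int \<Rightarrow> rat) M) *\<^sub>v c = 0\<^sub>v (dim_col M) \<longrightarrow>
        c = 0\<^sub>v (dim_row M))"

definition lattice_basis :: "int mat \<Rightarrow> int vec set \<Rightarrow> bool" where
  "lattice_basis V L \<longleftrightarrow> full_row_rank V \<and> L_R V = L"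

definition lattice_det :: "int vec set \<Rightarrow> real" where
  "lattice_det L = (SOME d. \<exists>V. lattice_basis V L \<and>
       d = sqrt (real_of_int (det (V * transpose_mat V))))"

definition ndet :: "int vec set \<Rightarrow> real" where
  "ndet \<Lambda> = (SOME d. \<exists>M. lattice_basis M \<Lambda> \<and>
       d = lattice_det (L_R M) / lattice_det (L_C M))"

end

theory Submission
  imports Defs
begin

text \<open>Row-reduce \<open>A\<^sup>T\<close> by a unimodular matrix \<open>P\<close> to upper triangular form
  and let \<open>Q\<close> be the inverse of \<open>P\<close>. Splitting \<open>Q\<close> into its first \<open>k\<close> and
  last \<open>n - k\<close> columns \<open>Q1, Q2\<close>, and \<open>P\<close> into the corresponding rows
  \<open>P1, P2\<close>, gives \<open>A = Z\<^sup>T Q1\<^sup>T\<close> with \<open>Z\<close> square and nonsingular;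
  since \<open>A B\<^sup>T = 0\<close> also \<open>B = X P2\<close> with \<open>X = B Q2\<close>. As \<open>Q1\<^sup>T\<close> and
  \<open>P2\<close> have integral right inverses, \<open>L_C(A) = L_C(Z\<^sup>T)\<close> and
  \<open>L_C(B) = L_C(X)\<close>, so the two normalized determinants reduce to the Gram
  determinants \<open>sqrt(det(Q1\<^sup>T Q1))\<close> and \<open>sqrt(det(P2 P2\<^sup>T))\<close>. These agree
  by Jacobi's complementary minor identity, because \<open>det Q = \<plusminus>1\<close>.\<close>

lemma full_row_rank_transpose_mult_vec_eq_zero:
  assumes "full_row_rank V" and c: "c \<in> carrier_vec (dim_row V)"
    and "transpose_mat V *\<^sub>v c = 0\<^sub>v (dim_col V)"
  shows "c = 0\<^sub>v (dim_row V)"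
proof -
  have "map_mat (of_int :: int \<Rightarrow> rat) (transpose_mat V) *\<^sub>v map_vec of_int c
      = map_vec of_int (transpose_mat V *\<^sub>v c)"
    using c by (intro of_int_hom.mult_mat_vec_hom[symmetric]) auto
  also have "\<dots> = 0\<^sub>v (dim_col V)"
    using assms(3) by (simp add: of_int_hom.vec_hom_zero)
  finally have "map_vec (of_int :: int \<Rightarrow> rat) c = 0\<^sub>v (dim_row V)"
    using assms(1) c unfolding full_row_rank_def map_mat_transpose
    by (auto simp del: of_int_hom.vec_hom_zero_iff)
  then show ?thesis by simp
qed

lemma full_row_rank_det_gram_nonzero:
  assumes M: "M \<in> carrier_mat r n" and "full_row_rank M"
  shows "det (M * transpose_mat M) \<noteq> 0"
proof
  assume "det (M * transpose_mat M) = 0"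
  then obtain v where v: "v \<in> carrier_vec r" "v \<noteq> 0\<^sub>v r" "(M * transpose_mat M) *\<^sub>v v = 0\<^sub>v r"
    using det_0_iff_vec_prod_zero[of "M * transpose_mat M" r] M by auto
  define w where "w = transpose_mat M *\<^sub>v v"
  have w: "w \<in> carrier_vec n"
    using M v unfolding w_def by auto
  have "M *\<^sub>v w = 0\<^sub>v r"
    using M v unfolding w_def by (simp add: assoc_mult_mat_vec[of _ r n _ r])
  then have "w \<bullet> w = 0"
    using transpose_vec_mult_scalar[of M r n w v] M v w unfolding w_def by simp
  then have "(\<Sum>i<n. w $ i * w $ i) = 0"
    using w unfolding scalar_prod_def by (simp add: atLeast0LessThan)
  then have "\<forall>i<n. w $ i * w $ i = 0"
    by (subst (asm) sum_nonneg_eq_0_iff) auto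
  then have "transpose_mat M *\<^sub>v v = 0\<^sub>v (dim_col M)"
    using w M unfolding w_def[symmetric] by (intro eq_vecI) auto
  with assms v show False
    using full_row_rank_transpose_mult_vec_eq_zero[of M v] by auto
qed

lemma det_nonzero_imp_full_row_rank:
  assumes V: "V \<in> carrier_mat r r" and "det V \<noteq> 0"
  shows "full_row_rank V"
  unfolding full_row_rank_def
proof (intro ballI impI, rule ccontr)
  fix c :: "rat vec"
  assume "c \<in> carrier_vec (dim_row V)"
    and "transpose_mat (map_mat of_int V) *\<^sub>v c = 0\<^sub>v (dim_col V)"
    and "c \<noteq> 0\<^sub>v (dim_row V)"
  then have "det (transpose_mat (map_mat (of_int :: int \<Rightarrow> rat) V)) = 0"
    using det_0_iff_vec_prod_zero[of "transpose_mat (map_mat (of_int :: int \<Rightarrow> rat) V)" r] V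
    by auto
  then have "(of_int (det V) :: rat) = 0"
    using V by (simp add: det_transpose of_int_hom.hom_det)
  with \<open>det V \<noteq> 0\<close> show False by simp
qed

lemma nonsingular_mult_right_cancel:
  fixes X Y Z :: "'a::idom mat"
  assumes X: "X \<in> carrier_mat m k" and Y: "Y \<in> carrier_mat m k" and Z: "Z \<in> carrier_mat k k"
    and "det Z \<noteq> 0" and "X * Z = Y * Z"
  shows "X = Y"
proof -
  have scaled: "W * Z * adj_mat Z = det Z \<cdot>\<^sub>m W" if W: "W \<in> carrier_mat m k" for W
  proof -
    have "W * Z * adj_mat Z = W * (Z * adj_mat Z)"
      using W Z adj_mat(1)[OF Z] by (rule assoc_mult_mat)
    also have "\<dots> = W * (det Z \<cdot>\<^sub>m 1\<^sub>m k)"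
      using adj_mat(2)[OF Z] by simp
    also have "\<dots> = det Z \<cdot>\<^sub>m W"
      using W by (simp add: mult_smult_distrib[of _ m k _ k])
    finally show ?thesis .
  qed
  have "det Z \<cdot>\<^sub>m X = det Z \<cdot>\<^sub>m Y"
    using scaled[OF X] scaled[OF Y] \<open>X * Z = Y * Z\<close> by simp
  show ?thesis
  proof (rule eq_matI)
    fix i j assume "i < dim_row Y" "j < dim_col Y"
    with X Y have "det Z * X $$ (i,j) = det Z * Y $$ (i,j)"
      using arg_cong[OF \<open>det Z \<cdot>\<^sub>m X = det Z \<cdot>\<^sub>m Y\<close>, of "\<lambda>M. M $$ (i,j)"] by simp
    with \<open>det Z \<noteq> 0\<close> show "X $$ (i,j) = Y $$ (i,j)" by simp
  qed (use X Y in auto)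
qed

lemma full_row_rank_mult_right_cancel:
  assumes E: "E \<in> carrier_mat r s" and F: "F \<in> carrier_mat r s" and V: "V \<in> carrier_mat s m"
    and "full_row_rank V" and "E * V = F * V"
  shows "E = F"
proof (rule nonsingular_mult_right_cancel[OF E F])
  show "V * transpose_mat V \<in> carrier_mat s s" "det (V * transpose_mat V) \<noteq> 0"
    using V full_row_rank_det_gram_nonzero[OF V \<open>full_row_rank V\<close>] by auto
  have Vt: "transpose_mat V \<in> carrier_mat m s"
    using V by simp
  show "E * (V * transpose_mat V) = F * (V * transpose_mat V)"
    using assoc_mult_mat[OF E V Vt] assoc_mult_mat[OF F V Vt] \<open>E * V = F * V\<close> by simp
qed

lemma det_gram_mult_left:
  assumes W: "W \<in> carrier_mat r r" and R: "R \<in> carrier_mat r n"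
  shows "det ((W * R) * transpose_mat (W * R)) = det W * det W * det (R * transpose_mat R)"
proof -
  have Rt: "transpose_mat R \<in> carrier_mat n r" and Wt: "transpose_mat W \<in> carrier_mat r r"
    using W R by auto
  have RRt: "R * transpose_mat R \<in> carrier_mat r r"
    using R by simp
  have "(W * R) * transpose_mat (W * R) = (W * R) * (transpose_mat R * transpose_mat W)"
    by (simp add: transpose_mult[OF W R])
  also have "\<dots> = W * (R * (transpose_mat R * transpose_mat W))"
    by (rule assoc_mult_mat[OF W R mult_carrier_mat[OF Rt Wt]])
  also have "R * (transpose_mat R * transpose_mat W) = (R * transpose_mat R) * transpose_mat W"
    by (rule assoc_mult_mat[OF R Rt Wt, symmetric])
  finally have gram: "(W * R) * transpose_mat (W * R) = W * ((R * transpose_mat R) * transpose_mat W)" .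
  show ?thesis
    unfolding gram det_mult[OF W mult_carrier_mat[OF RRt Wt]] det_mult[OF RRt Wt] det_transpose[OF W]
    by simp
qed

definition mat_trace :: "'a::comm_semiring_1 mat \<Rightarrow> 'a" where
  "mat_trace M = (\<Sum>i<dim_row M. M $$ (i,i))"

lemma mat_trace_mult_comm:
  assumes A: "A \<in> carrier_mat r s" and B: "B \<in> carrier_mat s r"
  shows "mat_trace (A * B) = mat_trace (B * A)"
proof -
  have "mat_trace (A * B) = (\<Sum>i<r. \<Sum>j<s. A $$ (i,j) * B $$ (j,i))"
    unfolding mat_trace_def using A B by (simp add: scalar_prod_def atLeast0LessThan)
  also have "\<dots> = (\<Sum>j<s. \<Sum>i<r. B $$ (j,i) * A $$ (i,j))"
    by (subst sum.swap) (simp add: mult.commute)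
  also have "\<dots> = mat_trace (B * A)"
    unfolding mat_trace_def using A B by (simp add: scalar_prod_def atLeast0LessThan)
  finally show ?thesis .
qed

lemma mat_trace_one: "mat_trace (1\<^sub>m n) = of_nat n"
  unfolding mat_trace_def by simp

definition unimodular :: "nat \<Rightarrow> int mat \<Rightarrow> bool" where
  "unimodular n U \<longleftrightarrow> U \<in> carrier_mat n n \<and> \<bar>det U\<bar> = 1"

lemma unimodular_mult:
  assumes "unimodular n U" and "unimodular n V"
  shows "unimodular n (U * V)"
  using assms det_mult[of U n V] mult_carrier_mat[of U n n V n] unfolding unimodular_def
  by (simp add: abs_mult)

lemma unimodular_det_square:
  assumes "unimodular n U"
  shows "det U * det U = 1"
proof -
  have "det U * det U = \<bar>det U\<bar> * \<bar>det U\<bar>"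
    by (rule abs_mult_self_eq[symmetric])
  with assms show ?thesis
    unfolding unimodular_def by simp
qed

lemma mutually_inverse_unimodular:
  fixes U U' :: "int mat"
  assumes U: "U \<in> carrier_mat r s" and U': "U' \<in> carrier_mat s r"
    and U'U: "U' * U = 1\<^sub>m s" and UU': "U * U' = 1\<^sub>m r"
  shows "r = s" and "unimodular r U"
proof -
  have "int r = mat_trace (U * U')"
    unfolding UU' by (simp add: mat_trace_one)
  also have "\<dots> = mat_trace (U' * U)"
    by (rule mat_trace_mult_comm[OF U U'])
  also have "\<dots> = int s"
    unfolding U'U by (simp add: mat_trace_one)
  finally show "r = s" by simp
  then have "det U * det U' = 1"
    using det_mult[of U r U'] U U' UU' by simp
  then have "\<bar>det U\<bar> = 1"
    by (auto simp: zmult_eq_1_iff)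
  with U \<open>r = s\<close> show "unimodular r U"
    unfolding unimodular_def by simp
qed

lemma unimodular_inverse:
  assumes "unimodular n P"
  shows "\<exists>Q \<in> carrier_mat n n. P * Q = 1\<^sub>m n \<and> Q * P = 1\<^sub>m n"
proof -
  have P: "P \<in> carrier_mat n n" and unit: "det P * det P = 1"
    using assms unimodular_det_square unfolding unimodular_def by auto
  have adj: "adj_mat P \<in> carrier_mat n n"
    by (rule adj_mat(1)[OF P])
  have "P * (det P \<cdot>\<^sub>m adj_mat P) = det P \<cdot>\<^sub>m (det P \<cdot>\<^sub>m 1\<^sub>m n)"
    using mult_smult_distrib[OF P adj] adj_mat(2)[OF P] by simp
  moreover have "(det P \<cdot>\<^sub>m adj_mat P) * P = det P \<cdot>\<^sub>m (det P \<cdot>\<^sub>m 1\<^sub>m n)"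
    using mult_smult_assoc_mat[OF adj P] adj_mat(3)[OF P] by simp
  moreover have "det P \<cdot>\<^sub>m (det P \<cdot>\<^sub>m 1\<^sub>m n) = 1\<^sub>m n"
    using unit by (intro eq_matI) auto
  ultimately show ?thesis
    using adj by (intro bexI[of _ "det P \<cdot>\<^sub>m adj_mat P"]) auto
qed

lemma index_mult_mat_sum:
  assumes "A \<in> carrier_mat r s" and "B \<in> carrier_mat s t" and "i < r" and "j < t"
  shows "(A * B) $$ (i,j) = (\<Sum>l<s. A $$ (i,l) * B $$ (l,j))"
  using assms by (simp add: scalar_prod_def atLeast0LessThan)

lemma sum_lessThan_add_split:
  "(\<Sum>l<k + m. f l) = (\<Sum>l<k. f l) + (\<Sum>l<m. f (k + l :: nat))"
  by (induction m) (auto simp: add.assoc)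

section \<open>Lattice bases and lattice determinants\<close>

lemma L_C_eq_L_R_transpose: "L_C M = L_R (transpose_mat M)"
  unfolding L_C_def L_R_def by simp

lemma row_mem_L_R:
  assumes "i < dim_row X"
  shows "row X i \<in> L_R X"
proof -
  have "row X i = transpose_mat X *\<^sub>v unit_vec (dim_row X) i"
    using assms by (intro eq_vecI) auto
  then show ?thesis
    unfolding L_R_def using assms by auto
qed

lemma dim_vec_L_R: "x \<in> L_R M \<Longrightarrow> dim_vec x = dim_col M"
  unfolding L_R_def by auto

lemma zero_mem_L_R: "0\<^sub>v (dim_col M) \<in> L_R M"
proof -
  have "transpose_mat M *\<^sub>v 0\<^sub>v (dim_row M) = 0\<^sub>v (dim_col M)"
    by (intro eq_vecI) auto
  then show ?thesis
    unfolding L_R_def by (intro CollectI exI[of _ "0\<^sub>v (dim_row M)"] conjI) auto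
qed

lemma L_R_subset_imp_factor:
  assumes sub: "L_R X \<subseteq> L_R Y" and dim: "dim_col X = dim_col Y"
  shows "\<exists>U \<in> carrier_mat (dim_row X) (dim_row Y). X = U * Y"
proof -
  have "\<forall>i<dim_row X. \<exists>c. c \<in> carrier_vec (dim_row Y) \<and> row X i = transpose_mat Y *\<^sub>v c"
    using row_mem_L_R[of _ X] sub unfolding L_R_def by blast
  then obtain c where c: "\<And>i. i < dim_row X \<Longrightarrow>
      c i \<in> carrier_vec (dim_row Y) \<and> row X i = transpose_mat Y *\<^sub>v c i"
    by metis
  define U where "U = mat (dim_row X) (dim_row Y) (\<lambda>(i,j). c i $ j)"
  have U: "U \<in> carrier_mat (dim_row X) (dim_row Y)"
    unfolding U_def by simp
  have "X = U * Y"
  proof (rule eq_matI)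
    fix i j assume "i < dim_row (U * Y)" "j < dim_col (U * Y)"
    then have i: "i < dim_row X" and j: "j < dim_col Y"
      using U by auto
    have row_U: "row U i = c i"
      using c[OF i] i unfolding U_def by (intro eq_vecI) auto
    have "X $$ (i,j) = row X i $ j"
      using i j dim by simp
    also have "\<dots> = (transpose_mat Y *\<^sub>v c i) $ j"
      using c[OF i] by simp
    also have "\<dots> = c i \<bullet> col Y j"
      using c[OF i] j comm_scalar_prod[of "col Y j" "dim_row Y" "c i"] by simp
    also have "\<dots> = (U * Y) $$ (i,j)"
      using row_U i j U by simp
    finally show "X $$ (i,j) = (U * Y) $$ (i,j)" .
  qed (use U dim in auto)
  with U show ?thesis by blast
qed

lemma lattice_basis_change:
  assumes V: "lattice_basis V L" and W: "lattice_basis W L"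
  shows "\<exists>U. unimodular (dim_row V) U \<and> W = U * V"
proof -
  define r s m where "r = dim_row W" and "s = dim_row V" and "m = dim_col V"
  have LV: "L_R V = L" and LW: "L_R W = L" and fV: "full_row_rank V" and fW: "full_row_rank W"
    using V W unfolding lattice_basis_def by auto
  have zero: "0\<^sub>v (dim_col W) \<in> L_R V"
    using zero_mem_L_R[of W] LV LW by simp
  have "dim_col W = m"
    using dim_vec_L_R[OF zero] unfolding m_def by simp
  then have Vc: "V \<in> carrier_mat s m" and Wc: "W \<in> carrier_mat r m"
    unfolding r_def s_def m_def by auto
  have "\<exists>U \<in> carrier_mat r s. W = U * V"
    unfolding r_def s_def using L_R_subset_imp_factor[of W V] LV LW Vc Wc by simp
  then obtain U where U: "U \<in> carrier_mat r s" and WU: "W = U * V"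
    by blast
  have "\<exists>U' \<in> carrier_mat s r. V = U' * W"
    unfolding r_def s_def using L_R_subset_imp_factor[of V W] LV LW Vc Wc by simp
  then obtain U' where U': "U' \<in> carrier_mat s r" and VU: "V = U' * W"
    by blast
  have "(U' * U) * V = U' * (U * V)"
    by (rule assoc_mult_mat[OF U' U Vc])
  also have "\<dots> = 1\<^sub>m s * V"
    unfolding WU[symmetric] VU[symmetric] using Vc by simp
  finally have "(U' * U) * V = 1\<^sub>m s * V" .
  then have U'U: "U' * U = 1\<^sub>m s"
    by (rule full_row_rank_mult_right_cancel[OF mult_carrier_mat[OF U' U] one_carrier_mat Vc fV])
  have "(U * U') * W = U * (U' * W)"
    by (rule assoc_mult_mat[OF U U' Wc])
  also have "\<dots> = 1\<^sub>m r * W"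
    unfolding VU[symmetric] WU[symmetric] using Wc by simp
  finally have "(U * U') * W = 1\<^sub>m r * W" .
  then have UU': "U * U' = 1\<^sub>m r"
    by (rule full_row_rank_mult_right_cancel[OF mult_carrier_mat[OF U U'] one_carrier_mat Wc fW])
  show ?thesis
    using mutually_inverse_unimodular[OF U U' U'U UU'] WU unfolding s_def by auto
qed

lemma lattice_det_eq:
  assumes "lattice_basis V L"
  shows "lattice_det L = sqrt (real_of_int (det (V * transpose_mat V)))"
  unfolding lattice_det_def
proof (rule someI2)
  fix d assume "\<exists>W. lattice_basis W L \<and> d = sqrt (real_of_int (det (W * transpose_mat W)))"
  then obtain W where W: "lattice_basis W L" and d: "d = sqrt (real_of_int (det (W * transpose_mat W)))"
    by blast
  obtain U where U: "unimodular (dim_row V) U" and WUV: "W = U * V"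
    using lattice_basis_change[OF assms W] by blast
  have "det (W * transpose_mat W) = det U * det U * det (V * transpose_mat V)"
    unfolding WUV using U unfolding unimodular_def
    by (intro det_gram_mult_left[of U "dim_row V" V "dim_col V"]) simp_all
  then show "d = sqrt (real_of_int (det (V * transpose_mat V)))"
    using d unimodular_det_square[OF U] by simp
next
  show "\<exists>W. lattice_basis W L \<and>
      sqrt (real_of_int (det (V * transpose_mat V))) = sqrt (real_of_int (det (W * transpose_mat W)))"
    using assms by blast
qed

lemma lattice_det_L_C_square:
  assumes W: "W \<in> carrier_mat r r" and "det W \<noteq> 0"
  shows "lattice_det (L_C W) = \<bar>real_of_int (det W)\<bar>"
proof -
  have Wt: "transpose_mat W \<in> carrier_mat r r"
    using W by simp
  have "lattice_basis (transpose_mat W) (L_C W)"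
    unfolding lattice_basis_def L_C_eq_L_R_transpose
    using det_nonzero_imp_full_row_rank[OF Wt] det_transpose[OF W] assms by simp
  then have "lattice_det (L_C W) = sqrt (real_of_int (det (transpose_mat W * W)))"
    using lattice_det_eq by fastforce
  also have "det (transpose_mat W * W) = det W * det W"
    using det_mult[OF Wt W] det_transpose[OF W] by simp
  finally show ?thesis
    by (simp add: real_sqrt_mult_self)
qed

lemma L_C_mult_left:
  assumes "U \<in> carrier_mat r r'" and "M \<in> carrier_mat r' n"
  shows "L_C (U * M) = (\<lambda>y. U *\<^sub>v y) ` L_C M"
proof -
  have "L_C (U * M) = (\<lambda>c. (U * M) *\<^sub>v c) ` carrier_vec n"
    unfolding L_C_def Setcompr_eq_image using assms by simp
  also have "\<dots> = (\<lambda>c. U *\<^sub>v (M *\<^sub>v c)) ` carrier_vec n"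
    using assoc_mult_mat_vec[OF assms] by (intro image_cong) auto
  also have "\<dots> = (\<lambda>y. U *\<^sub>v y) ` L_C M"
    unfolding L_C_def Setcompr_eq_image image_image using assms by simp
  finally show ?thesis .
qed

lemma L_C_right_invertible:
  assumes R: "R \<in> carrier_mat r n" and S: "S \<in> carrier_mat n r" and RS: "R * S = 1\<^sub>m r"
  shows "L_C R = carrier_vec r"
proof
  show "L_C R \<subseteq> carrier_vec r"
    using R unfolding L_C_def by auto
  show "carrier_vec r \<subseteq> L_C R"
  proof
    fix d :: "int vec" assume d: "d \<in> carrier_vec r"
    then have "d = R *\<^sub>v (S *\<^sub>v d)"
      using assoc_mult_mat_vec[OF R S d] RS by simp
    moreover have "S *\<^sub>v d \<in> carrier_vec (dim_col R)"
      using R S d by simp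
    ultimately show "d \<in> L_C R"
      unfolding L_C_def by blast
  qed
qed

lemma L_C_mult_right_invertible:
  assumes W: "W \<in> carrier_mat r r'" and R: "R \<in> carrier_mat r' n" and S: "S \<in> carrier_mat n r'"
    and "R * S = 1\<^sub>m r'"
  shows "L_C (W * R) = L_C W"
proof -
  have "L_C (W * R) = (\<lambda>y. W *\<^sub>v y) ` carrier_vec r'"
    using L_C_mult_left[OF W R] L_C_right_invertible[OF R S \<open>R * S = 1\<^sub>m r'\<close>] by simp
  also have "\<dots> = L_C W"
    unfolding L_C_def Setcompr_eq_image using W by simp
  finally show ?thesis .
qed

text \<open>The square basis \<open>W\<close> says that \<open>L_C M\<close> has full rank; only for such lattices is
  \<open>lattice_det (L_C (U * M))\<close> independent of the unimodular \<open>U\<close>.\<close>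
lemma ndet_eq_det_ratio:
  assumes M: "M \<in> carrier_mat r n" and "full_row_rank M"
    and W: "W \<in> carrier_mat r r" and "det W \<noteq> 0" and LC: "L_C M = L_C W"
  shows "ndet (L_R M) = lattice_det (L_R M) / lattice_det (L_C M)"
  unfolding ndet_def
proof (rule someI2)
  have basis: "lattice_basis M (L_R M)"
    using \<open>full_row_rank M\<close> unfolding lattice_basis_def by simp
  then show "\<exists>M'. lattice_basis M' (L_R M) \<and>
      lattice_det (L_R M) / lattice_det (L_C M) = lattice_det (L_R M') / lattice_det (L_C M')"
    by blast
  fix d assume "\<exists>M'. lattice_basis M' (L_R M) \<and> d = lattice_det (L_R M') / lattice_det (L_C M')"
  then obtain M' where M': "lattice_basis M' (L_R M)"
    and d: "d = lattice_det (L_R M') / lattice_det (L_C M')"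
    by blast
  obtain U where U: "unimodular r U" and M'U: "M' = U * M"
    using lattice_basis_change[OF basis M'] M by auto
  have Uc: "U \<in> carrier_mat r r" and "\<bar>det U\<bar> = 1"
    using U unfolding unimodular_def by auto
  then have absdet: "\<bar>det (U * W)\<bar> = \<bar>det W\<bar>"
    by (simp add: det_mult[OF Uc W] abs_mult)
  then have "det (U * W) \<noteq> 0"
    using \<open>det W \<noteq> 0\<close> by auto
  have "L_C M' = L_C (U * W)"
    unfolding M'U using L_C_mult_left[OF Uc M] L_C_mult_left[OF Uc W] LC by simp
  then have "lattice_det (L_C M') = \<bar>real_of_int (det (U * W))\<bar>"
    using lattice_det_L_C_square[OF mult_carrier_mat[OF Uc W] \<open>det (U * W) \<noteq> 0\<close>] by simp
  also have "\<dots> = \<bar>real_of_int (det W)\<bar>"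
    using arg_cong[OF absdet, of real_of_int] by simp
  also have "\<dots> = lattice_det (L_C M)"
    unfolding LC by (rule lattice_det_L_C_square[OF W \<open>det W \<noteq> 0\<close>, symmetric])
  finally have "lattice_det (L_C M') = lattice_det (L_C M)" .
  moreover have "L_R M' = L_R M"
    using M' unfolding lattice_basis_def by simp
  ultimately show "d = lattice_det (L_R M) / lattice_det (L_C M)"
    using d by simp
qed

lemma ndet_right_invertible_factor:
  assumes W: "W \<in> carrier_mat r r" and R: "R \<in> carrier_mat r n" and S: "S \<in> carrier_mat n r"
    and RS: "R * S = 1\<^sub>m r" and MWR: "M = W * R" and "full_row_rank M"
  shows "sqrt (real_of_int (det (M * transpose_mat M))) / lattice_det (L_C M)
      = sqrt (real_of_int (det (R * transpose_mat R)))" (is "?ratio = _")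
    and "ndet (L_R M) = sqrt (real_of_int (det (R * transpose_mat R)))"
proof -
  have M: "M \<in> carrier_mat r n"
    using W R MWR by simp
  have gram: "det (M * transpose_mat M) = det W * det W * det (R * transpose_mat R)"
    unfolding MWR by (rule det_gram_mult_left[OF W R])
  then have "det W \<noteq> 0"
    using full_row_rank_det_gram_nonzero[OF M \<open>full_row_rank M\<close>] by auto
  have LC: "L_C M = L_C W"
    unfolding MWR by (rule L_C_mult_right_invertible[OF W R S RS])
  have "lattice_det (L_C M) = \<bar>real_of_int (det W)\<bar>"
    unfolding LC by (rule lattice_det_L_C_square[OF W \<open>det W \<noteq> 0\<close>])
  then show ratio: "?ratio = sqrt (real_of_int (det (R * transpose_mat R)))"
    unfolding gram using \<open>det W \<noteq> 0\<close> by (simp add: real_sqrt_mult real_sqrt_mult_self)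
  have "lattice_det (L_R M) = sqrt (real_of_int (det (M * transpose_mat M)))"
    using lattice_det_eq \<open>full_row_rank M\<close> unfolding lattice_basis_def by blast
  then show "ndet (L_R M) = sqrt (real_of_int (det (R * transpose_mat R)))"
    using ndet_eq_det_ratio[OF M \<open>full_row_rank M\<close> W \<open>det W \<noteq> 0\<close> LC] ratio by simp
qed

section \<open>Unimodular row reduction\<close>

definition row_equivalent :: "nat \<Rightarrow> int mat \<Rightarrow> int mat \<Rightarrow> bool" where
  "row_equivalent n T T' \<longleftrightarrow> (\<exists>P. unimodular n P \<and> T' = P * T)"

lemma row_equivalent_refl: "T \<in> carrier_mat n k \<Longrightarrow> row_equivalent n T T"
  unfolding row_equivalent_def unimodular_def by (intro exI[of _ "1\<^sub>m n"]) simp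

lemma row_equivalent_trans:
  assumes T: "T \<in> carrier_mat n k" and "row_equivalent n T T'" and "row_equivalent n T' T''"
  shows "row_equivalent n T T''"
proof -
  obtain P where P: "unimodular n P" and T': "T' = P * T"
    using assms(2) unfolding row_equivalent_def by blast
  obtain P' where P': "unimodular n P'" and T'': "T'' = P' * T'"
    using assms(3) unfolding row_equivalent_def by blast
  have "T'' = (P' * P) * T"
    using P P' T unfolding T'' T' unimodular_def by (simp add: assoc_mult_mat[of _ n n _ n _ k])
  then show ?thesis
    unfolding row_equivalent_def using unimodular_mult[OF P' P] by blast
qed

lemma row_equivalent_carrier:
  "row_equivalent n T T' \<Longrightarrow> T \<in> carrier_mat n k \<Longrightarrow> T' \<in> carrier_mat n k"
  unfolding row_equivalent_def unimodular_def by auto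

lemma row_equivalent_addrow:
  assumes "T \<in> carrier_mat n k" and "a \<noteq> b" and "b < n"
  shows "row_equivalent n T (addrow q a b T)"
  unfolding row_equivalent_def unimodular_def
  using addrow_mat[OF assms(1,3)]
  by (intro exI[of _ "addrow_mat n q a b"]) (simp add: det_addrow_mat[OF assms(2)])

lemma row_equivalent_swaprows:
  assumes "T \<in> carrier_mat n k" and "a \<noteq> b" and "a < n" and "b < n"
  shows "row_equivalent n T (swaprows a b T)"
  unfolding row_equivalent_def unimodular_def
  using swaprows_mat[OF assms(1,3,4)]
  by (intro exI[of _ "swaprows_mat n a b"]) (simp add: det_swaprows_mat[OF assms(3,4,2)])

lemma row_equivalent_euclid_step:
  assumes T: "T \<in> carrier_mat n k" and ab: "a < n" "b < n" "a \<noteq> b" and j: "j < k"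
    and nonzero: "T $$ (b,j) \<noteq> 0"
  shows "\<exists>T'. row_equivalent n T T' \<and> nat \<bar>T' $$ (b,j)\<bar> < nat \<bar>T $$ (b,j)\<bar>
     \<and> (\<forall>i<n. i \<noteq> a \<and> i \<noteq> b \<longrightarrow> (\<forall>c<k. T' $$ (i,c) = T $$ (i,c)))
     \<and> (\<forall>c<k. T $$ (a,c) = 0 \<and> T $$ (b,c) = 0 \<longrightarrow> T' $$ (a,c) = 0 \<and> T' $$ (b,c) = 0)"
proof -
  define q where "q = T $$ (a,j) div T $$ (b,j)"
  define T1 where "T1 = addrow (-q) a b T"
  define T2 where "T2 = swaprows a b T1"
  have T1c: "T1 \<in> carrier_mat n k"
    unfolding T1_def using T by simp
  have "row_equivalent n T T1"
    unfolding T1_def by (rule row_equivalent_addrow[OF T ab(3,2)])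
  moreover have "row_equivalent n T1 T2"
    unfolding T2_def by (rule row_equivalent_swaprows[OF T1c ab(3,1,2)])
  ultimately have "row_equivalent n T T2"
    by (rule row_equivalent_trans[OF T])
  have e1: "T1 $$ (i,c) = (if i = a then -q * T $$ (b,c) + T $$ (a,c) else T $$ (i,c))"
    if "i < n" "c < k" for i c
    unfolding T1_def using T that by auto
  have e2: "T2 $$ (i,c) = (if i = a then T1 $$ (b,c) else if i = b then T1 $$ (a,c) else T1 $$ (i,c))"
    if "i < n" "c < k" for i c
    unfolding T2_def using T1c that by auto
  have "T2 $$ (b,j) = T $$ (a,j) mod T $$ (b,j)"
    using e2[OF ab(2) j] e1[OF ab(1) j] ab j unfolding q_def
    by (simp add: minus_div_mult_eq_mod[symmetric] algebra_simps)
  then have "nat \<bar>T2 $$ (b,j)\<bar> < nat \<bar>T $$ (b,j)\<bar>"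
    using abs_mod_less[OF nonzero, of "T $$ (a,j)"] nonzero by simp
  moreover have "T2 $$ (i,c) = T $$ (i,c)" if "i < n" "i \<noteq> a \<and> i \<noteq> b" "c < k" for i c
    using that e1 e2 by auto
  moreover have "T2 $$ (a,c) = 0 \<and> T2 $$ (b,c) = 0"
    if "c < k" "T $$ (a,c) = 0 \<and> T $$ (b,c) = 0" for c
    using that e2[OF ab(1)] e2[OF ab(2)] e1[OF ab(1)] e1[OF ab(2)] ab by auto
  ultimately show ?thesis
    using \<open>row_equivalent n T T2\<close> by blast
qed

lemma row_equivalent_clear_entry:
  assumes "T \<in> carrier_mat n k" and "a < n" and "b < n" and "a \<noteq> b" and "j < k"
  shows "\<exists>T'. row_equivalent n T T' \<and> T' $$ (b,j) = 0
     \<and> (\<forall>i<n. i \<noteq> a \<and> i \<noteq> b \<longrightarrow> (\<forall>c<k. T' $$ (i,c) = T $$ (i,c)))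
     \<and> (\<forall>c<k. T $$ (a,c) = 0 \<and> T $$ (b,c) = 0 \<longrightarrow> T' $$ (a,c) = 0 \<and> T' $$ (b,c) = 0)"
  using assms
proof (induction "nat \<bar>T $$ (b,j)\<bar>" arbitrary: T rule: less_induct)
  case less
  note T = less.prems(1) and ab = less.prems(2-4) and j = less.prems(5)
  show ?case
  proof (cases "T $$ (b,j) = 0")
    case True
    then show ?thesis
      using row_equivalent_refl[OF T] by blast
  next
    case False
    obtain T1 where T_T1: "row_equivalent n T T1" and lt: "nat \<bar>T1 $$ (b,j)\<bar> < nat \<bar>T $$ (b,j)\<bar>"
      and same1: "\<forall>i<n. i \<noteq> a \<and> i \<noteq> b \<longrightarrow> (\<forall>c<k. T1 $$ (i,c) = T $$ (i,c))"
      and keep1: "\<forall>c<k. T $$ (a,c) = 0 \<and> T $$ (b,c) = 0 \<longrightarrow> T1 $$ (a,c) = 0 \<and> T1 $$ (b,c) = 0"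
      using row_equivalent_euclid_step[OF T ab j False] by blast
    obtain T' where T1_T': "row_equivalent n T1 T'" and "T' $$ (b,j) = 0"
      and same: "\<forall>i<n. i \<noteq> a \<and> i \<noteq> b \<longrightarrow> (\<forall>c<k. T' $$ (i,c) = T1 $$ (i,c))"
      and keep: "\<forall>c<k. T1 $$ (a,c) = 0 \<and> T1 $$ (b,c) = 0 \<longrightarrow> T' $$ (a,c) = 0 \<and> T' $$ (b,c) = 0"
      using less.hyps[OF lt row_equivalent_carrier[OF T_T1 T] ab j] by blast
    have "row_equivalent n T T'"
      by (rule row_equivalent_trans[OF T T_T1 T1_T'])
    with \<open>T' $$ (b,j) = 0\<close> same1 keep1 same keep show ?thesis
      by (intro exI[of _ T']) auto
  qed
qed

definition triangular_upto :: "nat \<Rightarrow> 'a::zero mat \<Rightarrow> bool" where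
  "triangular_upto j T \<longleftrightarrow> (\<forall>i<dim_row T. \<forall>c<j. c < i \<longrightarrow> T $$ (i,c) = 0)"

lemma triangular_upto_change_two_rows:
  assumes T: "T \<in> carrier_mat n k" and T': "T' \<in> carrier_mat n k" and tri: "triangular_upto j T"
    and "j < b" and "b < n"
    and same: "\<forall>i<n. i \<noteq> j \<and> i \<noteq> b \<longrightarrow> (\<forall>c<k. T' $$ (i,c) = T $$ (i,c))"
    and keep: "\<forall>c<k. T $$ (j,c) = 0 \<and> T $$ (b,c) = 0 \<longrightarrow> T' $$ (j,c) = 0 \<and> T' $$ (b,c) = 0"
    and "j \<le> k"
  shows "triangular_upto j T'"
  unfolding triangular_upto_def
proof (intro allI impI)
  fix i c assume "i < dim_row T'" "c < j" "c < i"
  then have "i < n" "c < k"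
    using T' \<open>j \<le> k\<close> by auto
  show "T' $$ (i,c) = 0"
  proof (cases "i = j \<or> i = b")
    case True
    have "T $$ (j,c) = 0" "T $$ (b,c) = 0"
      using tri T \<open>c < j\<close> \<open>j < b\<close> \<open>b < n\<close> unfolding triangular_upto_def by auto
    then show ?thesis
      using keep \<open>c < k\<close> True by auto
  next
    case False
    then show ?thesis
      using same tri T \<open>i < n\<close> \<open>c < j\<close> \<open>c < i\<close> \<open>c < k\<close> unfolding triangular_upto_def by auto
  qed
qed

lemma row_equivalent_clear_column_prefix:
  assumes T: "T \<in> carrier_mat n k" and j: "j < k" and tri: "triangular_upto j T"
    and "Suc j + d \<le> n"
  shows "\<exists>T'. row_equivalent n T T' \<and> triangular_upto j T'
    \<and> (\<forall>i. j < i \<and> i < Suc j + d \<longrightarrow> T' $$ (i,j) = 0)"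
  using \<open>Suc j + d \<le> n\<close>
proof (induction d)
  case 0
  then show ?case
    using row_equivalent_refl[OF T] tri by auto
next
  case (Suc d)
  then obtain T1 where T_T1: "row_equivalent n T T1" and tri1: "triangular_upto j T1"
    and col1: "\<forall>i. j < i \<and> i < Suc j + d \<longrightarrow> T1 $$ (i,j) = 0"
    by auto
  have T1: "T1 \<in> carrier_mat n k"
    by (rule row_equivalent_carrier[OF T_T1 T])
  define b where "b = Suc j + d"
  have b: "b < n" "j \<noteq> b" "j < n" "j < b"
    using Suc.prems unfolding b_def by auto
  obtain T2 where T1_T2: "row_equivalent n T1 T2" and "T2 $$ (b,j) = 0"
    and same: "\<forall>i<n. i \<noteq> j \<and> i \<noteq> b \<longrightarrow> (\<forall>c<k. T2 $$ (i,c) = T1 $$ (i,c))"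
    and keep: "\<forall>c<k. T1 $$ (j,c) = 0 \<and> T1 $$ (b,c) = 0 \<longrightarrow> T2 $$ (j,c) = 0 \<and> T2 $$ (b,c) = 0"
    using row_equivalent_clear_entry[OF T1 b(3) b(1) b(2) j] by blast
  have T2: "T2 \<in> carrier_mat n k"
    by (rule row_equivalent_carrier[OF T1_T2 T1])
  have "triangular_upto j T2"
    using triangular_upto_change_two_rows[OF T1 T2 tri1 b(4) b(1) same keep] j by simp
  moreover have "T2 $$ (i,j) = 0" if "j < i" "i < Suc j + Suc d" for i
  proof (cases "i = b")
    case True
    then show ?thesis using \<open>T2 $$ (b,j) = 0\<close> by simp
  next
    case False
    then have "i < Suc j + d" "i < n"
      using that b unfolding b_def by auto
    then show ?thesis
      using same col1 that False j by auto
  qed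
  ultimately show ?case
    using row_equivalent_trans[OF T T_T1 T1_T2] by blast
qed

lemma row_equivalent_clear_column:
  assumes T: "T \<in> carrier_mat n k" and "j < k" and "j < n" and "triangular_upto j T"
  shows "\<exists>T'. row_equivalent n T T' \<and> triangular_upto (Suc j) T'"
proof -
  obtain T' where T_T': "row_equivalent n T T'" and tri: "triangular_upto j T'"
    and col: "\<forall>i. j < i \<and> i < Suc j + (n - Suc j) \<longrightarrow> T' $$ (i,j) = 0"
    using row_equivalent_clear_column_prefix[OF assms(1,2,4), of "n - Suc j"] \<open>j < n\<close> by auto
  have "dim_row T' = n"
    using row_equivalent_carrier[OF T_T' T] by simp
  then have "triangular_upto (Suc j) T'"
    using tri col \<open>j < n\<close> unfolding triangular_upto_def by (auto simp: less_Suc_eq)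
  with T_T' show ?thesis by blast
qed

lemma row_equivalent_triangular:
  assumes T: "T \<in> carrier_mat n k" and "k \<le> n"
  shows "\<exists>T'. row_equivalent n T T' \<and> triangular_upto k T'"
proof -
  have "\<exists>T'. row_equivalent n T T' \<and> triangular_upto j T'" if "j \<le> k" for j
    using that
  proof (induction j)
    case 0
    then show ?case
      using row_equivalent_refl[OF T] unfolding triangular_upto_def by auto
  next
    case (Suc j)
    then obtain T1 where T_T1: "row_equivalent n T T1" and "triangular_upto j T1"
      by auto
    moreover have "T1 \<in> carrier_mat n k"
      by (rule row_equivalent_carrier[OF T_T1 T])
    ultimately obtain T2 where "row_equivalent n T1 T2" "triangular_upto (Suc j) T2"
      using row_equivalent_clear_column[of T1 n k j] Suc.prems \<open>k \<le> n\<close> by auto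
    then show ?case
      using row_equivalent_trans[OF T T_T1] by blast
  qed
  then show ?thesis by blast
qed

section \<open>Complementary blocks of a unimodular matrix\<close>

locale inverse_pair =
  fixes P Q :: "int mat" and k m :: nat
  assumes P: "P \<in> carrier_mat (k+m) (k+m)" and Q: "Q \<in> carrier_mat (k+m) (k+m)"
    and PQ: "P * Q = 1\<^sub>m (k+m)" and QP: "Q * P = 1\<^sub>m (k+m)"
begin

definition "Q1 = mat (k+m) k (\<lambda>(i,j). Q $$ (i,j))"
definition "Q2 = mat (k+m) m (\<lambda>(i,j). Q $$ (i,k+j))"
definition "P1 = mat k (k+m) (\<lambda>(i,j). P $$ (i,j))"
definition "P2 = mat m (k+m) (\<lambda>(i,j). P $$ (k+i,j))"

lemma blocks_carrier:
  "Q1 \<in> carrier_mat (k+m) k" "Q2 \<in> carrier_mat (k+m) m"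
  "P1 \<in> carrier_mat k (k+m)" "P2 \<in> carrier_mat m (k+m)"
  unfolding Q1_def Q2_def P1_def P2_def by auto

lemma PQ_entry:
  "i < k+m \<Longrightarrow> j < k+m \<Longrightarrow> (\<Sum>l<k+m. P $$ (i,l) * Q $$ (l,j)) = (if i = j then 1 else 0)"
  using arg_cong[OF PQ, of "\<lambda>M. M $$ (i,j)"] index_mult_mat_sum[OF P Q, of i j] by simp

lemma QP_entry:
  "i < k+m \<Longrightarrow> j < k+m \<Longrightarrow> (\<Sum>l<k+m. Q $$ (i,l) * P $$ (l,j)) = (if i = j then 1 else 0)"
  using arg_cong[OF QP, of "\<lambda>M. M $$ (i,j)"] index_mult_mat_sum[OF Q P, of i j] by simp

lemma P1_Q1: "P1 * Q1 = 1\<^sub>m k"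
proof (rule eq_matI)
  fix i j assume "i < dim_row (1\<^sub>m k)" "j < dim_col (1\<^sub>m k)"
  then have "(P1 * Q1) $$ (i,j) = (\<Sum>l<k+m. P $$ (i,l) * Q $$ (l,j))"
    by (subst index_mult_mat_sum[OF blocks_carrier(3,1)]) (auto simp: P1_def Q1_def)
  also have "\<dots> = 1\<^sub>m k $$ (i,j)"
    using \<open>i < dim_row (1\<^sub>m k)\<close> \<open>j < dim_col (1\<^sub>m k)\<close> by (subst PQ_entry) auto
  finally show "(P1 * Q1) $$ (i,j) = 1\<^sub>m k $$ (i,j)" .
qed (use blocks_carrier in auto)

lemma P2_Q2: "P2 * Q2 = 1\<^sub>m m"
proof (rule eq_matI)
  fix i j assume "i < dim_row (1\<^sub>m m)" "j < dim_col (1\<^sub>m m)"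
  then have "(P2 * Q2) $$ (i,j) = (\<Sum>l<k+m. P $$ (k+i,l) * Q $$ (l,k+j))"
    by (subst index_mult_mat_sum[OF blocks_carrier(4,2)]) (auto simp: P2_def Q2_def)
  also have "\<dots> = 1\<^sub>m m $$ (i,j)"
    using \<open>i < dim_row (1\<^sub>m m)\<close> \<open>j < dim_col (1\<^sub>m m)\<close> by (subst PQ_entry) auto
  finally show "(P2 * Q2) $$ (i,j) = 1\<^sub>m m $$ (i,j)" .
qed (use blocks_carrier in auto)

lemma Q1_P1_plus_Q2_P2: "Q1 * P1 + Q2 * P2 = 1\<^sub>m (k+m)"
proof (rule eq_matI)
  fix i j assume "i < dim_row (1\<^sub>m (k+m))" "j < dim_col (1\<^sub>m (k+m))"
  then have i: "i < k+m" and j: "j < k+m" by auto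
  have "(Q1 * P1 + Q2 * P2) $$ (i,j)
     = (\<Sum>l<k. Q $$ (i,l) * P $$ (l,j)) + (\<Sum>l<m. Q $$ (i,k+l) * P $$ (k+l,j))"
    using i j blocks_carrier by (simp add: P1_def P2_def Q1_def Q2_def scalar_prod_def atLeast0LessThan)
  also have "\<dots> = (\<Sum>l<k+m. Q $$ (i,l) * P $$ (l,j))"
    by (rule sum_lessThan_add_split[symmetric])
  also have "\<dots> = 1\<^sub>m (k+m) $$ (i,j)"
    using i j by (subst QP_entry) auto
  finally show "(Q1 * P1 + Q2 * P2) $$ (i,j) = 1\<^sub>m (k+m) $$ (i,j)" .
qed (use blocks_carrier in auto)

definition "Q1_P2T = mat (k+m) (k+m) (\<lambda>(i,j). if j < k then Q $$ (i,j) else P $$ (j,i))"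

lemma Q1_P2T_carrier: "Q1_P2T \<in> carrier_mat (k+m) (k+m)"
  unfolding Q1_P2T_def by simp

lemma transpose_Q_mult_Q1_P2T:
  "transpose_mat Q * Q1_P2T
     = four_block_mat (transpose_mat Q1 * Q1) (0\<^sub>m k m) (transpose_mat Q2 * Q1) (1\<^sub>m m)"
  (is "_ = ?B")
proof (rule eq_matI)
  fix i j assume "i < dim_row ?B" "j < dim_col ?B"
  then have i: "i < k+m" and j: "j < k+m"
    using blocks_carrier by auto
  have lhs: "(transpose_mat Q * Q1_P2T) $$ (i,j) = (\<Sum>l<k+m. Q $$ (l,i) * Q1_P2T $$ (l,j))"
    using i j Q by (subst index_mult_mat_sum[OF _ Q1_P2T_carrier]) auto
  show "(transpose_mat Q * Q1_P2T) $$ (i,j) = ?B $$ (i,j)"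
  proof (cases "j < k")
    case True
    have "(transpose_mat Q * Q1_P2T) $$ (i,j) = (\<Sum>l<k+m. Q $$ (l,i) * Q $$ (l,j))"
      unfolding lhs using True by (intro sum.cong) (auto simp: Q1_P2T_def)
    moreover have "?B $$ (i,j) = (\<Sum>l<k+m. Q $$ (l,i) * Q $$ (l,j))"
      using i j True blocks_carrier by (auto simp: Q1_def Q2_def scalar_prod_def atLeast0LessThan)
    ultimately show ?thesis by simp
  next
    case False
    have "(transpose_mat Q * Q1_P2T) $$ (i,j) = (\<Sum>l<k+m. P $$ (j,l) * Q $$ (l,i))"
      unfolding lhs using False j by (intro sum.cong) (auto simp: Q1_P2T_def)
    also have "\<dots> = (if j = i then 1 else 0)"
      using PQ_entry[OF j i] .
    finally show ?thesis
      using i j False blocks_carrier by auto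
  qed
qed (use blocks_carrier Q1_P2T_carrier Q in auto)

lemma gram_Q1_P2T:
  "transpose_mat Q1_P2T * Q1_P2T
     = four_block_mat (transpose_mat Q1 * Q1) (0\<^sub>m k m) (0\<^sub>m m k) (P2 * transpose_mat P2)"
  (is "_ = ?B")
proof (rule eq_matI)
  fix i j assume "i < dim_row ?B" "j < dim_col ?B"
  then have i: "i < k+m" and j: "j < k+m"
    using blocks_carrier by auto
  have lhs: "(transpose_mat Q1_P2T * Q1_P2T) $$ (i,j) = (\<Sum>l<k+m. Q1_P2T $$ (l,i) * Q1_P2T $$ (l,j))"
    using i j Q1_P2T_carrier by (subst index_mult_mat_sum[OF _ Q1_P2T_carrier]) auto
  consider "i < k" "j < k" | "i < k" "\<not> j < k" | "\<not> i < k" "j < k" | "\<not> i < k" "\<not> j < k"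
    by blast
  then show "(transpose_mat Q1_P2T * Q1_P2T) $$ (i,j) = ?B $$ (i,j)"
  proof cases
    case 1
    then have "(transpose_mat Q1_P2T * Q1_P2T) $$ (i,j) = (\<Sum>l<k+m. Q $$ (l,i) * Q $$ (l,j))"
      unfolding lhs by (intro sum.cong) (auto simp: Q1_P2T_def)
    then show ?thesis
      using i j 1 blocks_carrier by (auto simp: Q1_def scalar_prod_def atLeast0LessThan)
  next
    case 2
    then have "(transpose_mat Q1_P2T * Q1_P2T) $$ (i,j) = (\<Sum>l<k+m. P $$ (j,l) * Q $$ (l,i))"
      unfolding lhs using j by (intro sum.cong) (auto simp: Q1_P2T_def mult.commute)
    also have "\<dots> = 0"
      using PQ_entry[OF j i] 2 by auto
    finally show ?thesis
      using i j 2 blocks_carrier by auto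
  next
    case 3
    then have "(transpose_mat Q1_P2T * Q1_P2T) $$ (i,j) = (\<Sum>l<k+m. P $$ (i,l) * Q $$ (l,j))"
      unfolding lhs using i by (intro sum.cong) (auto simp: Q1_P2T_def)
    also have "\<dots> = 0"
      using PQ_entry[OF i j] 3 by auto
    finally show ?thesis
      using i j 3 blocks_carrier by auto
  next
    case 4
    then have "(transpose_mat Q1_P2T * Q1_P2T) $$ (i,j) = (\<Sum>l<k+m. P $$ (i,l) * P $$ (j,l))"
      unfolding lhs using i j by (intro sum.cong) (auto simp: Q1_P2T_def)
    then show ?thesis
      using i j 4 blocks_carrier by (auto simp: P2_def scalar_prod_def atLeast0LessThan)
  qed
qed (use blocks_carrier Q1_P2T_carrier in auto)

text \<open>A form of Jacobi's complementary minor theorem: compute the determinant of the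
  Gram matrix of \<open>[Q1 | P2\<^sup>T]\<close> once directly and once via \<open>Q\<^sup>T [Q1 | P2\<^sup>T]\<close>, using \<open>det Q = \<plusminus>1\<close>.\<close>
lemma det_gram_P2_eq_det_gram_Q1:
  assumes nonzero: "det (transpose_mat Q1 * Q1) \<noteq> 0"
  shows "det (P2 * transpose_mat P2) = det (transpose_mat Q1 * Q1)"
proof -
  define D D' where "D = det (transpose_mat Q1 * Q1)" and "D' = det (P2 * transpose_mat P2)"
  have G: "transpose_mat Q1 * Q1 \<in> carrier_mat k k"
    and QtQ: "transpose_mat Q2 * Q1 \<in> carrier_mat m k"
    and H: "P2 * transpose_mat P2 \<in> carrier_mat m m"
    using blocks_carrier by auto
  have "det (transpose_mat Q * Q1_P2T) = D"
    unfolding transpose_Q_mult_Q1_P2T D_def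
    by (subst det_four_block_mat_upper_right_zero[OF G refl QtQ]) auto
  then have D: "det Q * det Q1_P2T = D"
    using det_mult[OF _ Q1_P2T_carrier, of "transpose_mat Q"] det_transpose[OF Q] Q by simp
  have "det (transpose_mat Q1_P2T * Q1_P2T) = D * D'"
    unfolding gram_Q1_P2T D_def D'_def
    by (subst det_four_block_mat_upper_right_zero[OF G refl _ H]) auto
  then have DD': "det Q1_P2T * det Q1_P2T = D * D'"
    using det_mult[OF _ Q1_P2T_carrier, of "transpose_mat Q1_P2T"] det_transpose[OF Q1_P2T_carrier]
      Q1_P2T_carrier by simp
  have "det P * det Q = 1"
    using det_mult[OF P Q] PQ by simp
  then have "det Q * det Q = 1"
    by (auto simp: zmult_eq_1_iff)
  have "D * D = (det Q * det Q) * (det Q1_P2T * det Q1_P2T)"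
    unfolding D[symmetric] by (simp add: ac_simps)
  also have "\<dots> = D * D'"
    using \<open>det Q * det Q = 1\<close> DD' by simp
  finally show ?thesis
    using nonzero unfolding D_def D'_def by simp
qed

lemma factor_through_triangular:
  assumes T: "T \<in> carrier_mat (k+m) k"
    and zero: "\<forall>i<k+m. \<forall>c<k. k \<le> i \<longrightarrow> (P * T) $$ (i,c) = 0"
  shows "\<exists>Z \<in> carrier_mat k k. T = Q1 * Z"
proof
  define Y where "Y = P * T"
  define Z where "Z = mat k k (\<lambda>(i,j). Y $$ (i,j))"
  show Z: "Z \<in> carrier_mat k k"
    unfolding Z_def by simp
  have Y: "Y \<in> carrier_mat (k+m) k"
    unfolding Y_def using P T by simp
  have "Q * Y = (Q * P) * T"
    unfolding Y_def by (rule assoc_mult_mat[OF Q P T, symmetric])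
  then have QY: "Q * Y = T"
    using T unfolding QP by simp
  show "T = Q1 * Z"
  proof (rule eq_matI)
    fix i j assume "i < dim_row (Q1 * Z)" "j < dim_col (Q1 * Z)"
    then have i: "i < k+m" and j: "j < k"
      using blocks_carrier Z by auto
    have "T $$ (i,j) = (\<Sum>l<k+m. Q $$ (i,l) * Y $$ (l,j))"
      unfolding QY[symmetric] by (rule index_mult_mat_sum[OF Q Y i j])
    also have "\<dots> = (\<Sum>l<k. Q $$ (i,l) * Y $$ (l,j)) + (\<Sum>l<m. Q $$ (i,k+l) * Y $$ (k+l,j))"
      by (rule sum_lessThan_add_split)
    also have "(\<Sum>l<m. Q $$ (i,k+l) * Y $$ (k+l,j)) = 0"
      using zero j unfolding Y_def[symmetric] by (intro sum.neutral) auto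
    also have "(\<Sum>l<k. Q $$ (i,l) * Y $$ (l,j)) = (Q1 * Z) $$ (i,j)"
      using i j by (subst index_mult_mat_sum[OF blocks_carrier(1) Z]) (auto simp: Q1_def Z_def)
    finally show "T $$ (i,j) = (Q1 * Z) $$ (i,j)"
      by simp
  qed (use T Z blocks_carrier in auto)
qed

lemma factor_through_P2:
  assumes B: "B \<in> carrier_mat r (k+m)" and BQ1: "B * Q1 = 0\<^sub>m r k"
  shows "B = (B * Q2) * P2"
proof -
  note carr = blocks_carrier
  have "B = B * (Q1 * P1 + Q2 * P2)"
    unfolding Q1_P1_plus_Q2_P2 using B by simp
  also have "\<dots> = B * (Q1 * P1) + B * (Q2 * P2)"
    using B carr by (intro mult_add_distrib_mat) auto
  also have "B * (Q1 * P1) = (B * Q1) * P1"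
    by (rule assoc_mult_mat[OF B carr(1,3), symmetric])
  also have "B * (Q2 * P2) = (B * Q2) * P2"
    by (rule assoc_mult_mat[OF B carr(2,4), symmetric])
  finally show ?thesis
    unfolding BQ1 using B carr by simp
qed

lemma ndet_orthogonal_pair:
  assumes A: "A \<in> carrier_mat k (k+m)" and "full_row_rank A"
    and Z: "Z \<in> carrier_mat k k" and AQ1: "transpose_mat A = Q1 * Z"
    and B: "B \<in> carrier_mat m (k+m)" and "full_row_rank B"
    and AB: "A * transpose_mat B = 0\<^sub>m k m"
  shows "ndet (L_R A) = ndet (L_R B) \<and>
    sqrt (real_of_int (det (A * transpose_mat A))) / lattice_det (L_C A) =
    sqrt (real_of_int (det (B * transpose_mat B))) / lattice_det (L_C B)"
proof -
  note carr = blocks_carrier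
  have Zt: "transpose_mat Z \<in> carrier_mat k k" and Q1t: "transpose_mat Q1 \<in> carrier_mat k (k+m)"
    and P1t: "transpose_mat P1 \<in> carrier_mat (k+m) k" and BQ2: "B * Q2 \<in> carrier_mat m m"
    using Z B carr by auto
  have "A = transpose_mat (transpose_mat A)"
    by simp
  also have "\<dots> = transpose_mat Z * transpose_mat Q1"
    unfolding AQ1 by (rule transpose_mult[OF carr(1) Z])
  finally have AZ: "A = transpose_mat Z * transpose_mat Q1" .
  have "transpose_mat Q1 * transpose_mat P1 = 1\<^sub>m k"
    using transpose_mult[OF carr(3,1)] P1_Q1 by simp
  note factor_A = ndet_right_invertible_factor[OF Zt Q1t P1t this AZ \<open>full_row_rank A\<close>]
  have "det (A * transpose_mat A) = det Z * det Z * det (transpose_mat Q1 * Q1)"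
    using det_gram_mult_left[OF Zt Q1t] det_transpose[OF Z] unfolding AZ[symmetric] by simp
  then have "det Z \<noteq> 0" and gram_Q1: "det (transpose_mat Q1 * Q1) \<noteq> 0"
    using full_row_rank_det_gram_nonzero[OF A \<open>full_row_rank A\<close>] by auto
  have Bt: "transpose_mat B \<in> carrier_mat (k+m) m"
    using B by simp
  have "(B * Q1) * Z = B * transpose_mat A"
    unfolding AQ1 by (rule assoc_mult_mat[OF B carr(1) Z])
  also have "\<dots> = transpose_mat (A * transpose_mat B)"
    unfolding transpose_mult[OF A Bt] by simp
  also have "\<dots> = 0\<^sub>m m k * Z"
    unfolding AB using Z by simp
  finally have "B * Q1 = 0\<^sub>m m k"
    by (rule nonsingular_mult_right_cancel[OF mult_carrier_mat[OF B carr(1)] zero_carrier_mat Z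
          \<open>det Z \<noteq> 0\<close>])
  then have "B = (B * Q2) * P2"
    by (rule factor_through_P2[OF B])
  note factor_B = ndet_right_invertible_factor[OF BQ2 carr(4,2) P2_Q2 this \<open>full_row_rank B\<close>]
  show ?thesis
    using factor_A factor_B det_gram_P2_eq_det_gram_Q1[OF gram_Q1] by simp
qed

end

theorem theorem2p5:
  fixes A B :: "int mat" and k n :: nat
  assumes "0 < k" and "k < n"
    and "A \<in> carrier_mat k n" and "B \<in> carrier_mat (n - k) n"
    and "full_row_rank A" and "full_row_rank B"
    and "A * transpose_mat B = 0\<^sub>m k (n - k)"
  shows "ndet (L_R A) = ndet (L_R B) \<and>
    sqrt (real_of_int (det (A * transpose_mat A))) / lattice_det (L_C A) =
    sqrt (real_of_int (det (B * transpose_mat B))) / lattice_det (L_C B)"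
proof -
  define m where "m = n - k"
  have n: "n = k + m"
    using \<open>k < n\<close> unfolding m_def by simp
  have A: "A \<in> carrier_mat k (k+m)" and B: "B \<in> carrier_mat m (k+m)"
    and AB: "A * transpose_mat B = 0\<^sub>m k m"
    using assms(3,4,7) unfolding m_def[symmetric] n[symmetric] by simp_all
  have At: "transpose_mat A \<in> carrier_mat (k+m) k"
    using A by simp
  obtain Z where "row_equivalent (k+m) (transpose_mat A) Z" and tri: "triangular_upto k Z"
    using row_equivalent_triangular[OF At] by auto
  then obtain P where P: "unimodular (k+m) P" and Z: "Z = P * transpose_mat A"
    unfolding row_equivalent_def by blast
  obtain Q where "Q \<in> carrier_mat (k+m) (k+m)" "P * Q = 1\<^sub>m (k+m)" "Q * P = 1\<^sub>m (k+m)"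
    using unimodular_inverse[OF P] by blast
  then interpret inverse_pair P Q k m
    using P unfolding unimodular_def by unfold_locales auto
  have "\<forall>i<k+m. \<forall>c<k. k \<le> i \<longrightarrow> (P * transpose_mat A) $$ (i,c) = 0"
    using tri P At unfolding triangular_upto_def Z unimodular_def by auto
  then obtain Z1 where "Z1 \<in> carrier_mat k k" and "transpose_mat A = Q1 * Z1"
    using factor_through_triangular[OF At] by blast
  then show ?thesis
    using ndet_orthogonal_pair[OF A \<open>full_row_rank A\<close> _ _ B \<open>full_row_rank B\<close> AB] by blast
qed

end
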